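(* Let $k\ge2$ and let $\mathcal{M}_1,\dots,\mathcal{M}_k$ be matroids on a finite ground set $E$; let $T$ be independent in all of them, let $p\in(0,1)$, let $\Psi(e)$, $e\in T$, be i.i.d. with $\Pr[\Psi(e)=1]=1-p$, and let $S=\{e\in T:\Psi(e)=1\}$. Let $i\in[k]$, let $\tilde E\subseteq\mathrm{span}_i(T)$, and let $\tilde I\subseteq\tilde E$ be independent in $\mathcal{M}_i$ and in $\mathcal{M}_j/T$ for every $j\ne i$. Then for any fixed arrival order of the elements of $\tilde E$, $$\mathbb{E}_\Psi\left[\left|\mathrm{Greedy}(\mathcal{M}_1/T,\dots,\mathcal{M}_{i-1}/T,\mathcal{M}_i/S,\mathcal{M}_{i+1}/T,\dots,\mathcal{M}_k/T,\ \tilde E)\right|\right]\ge\frac{p}{1+p(k-1)}|\tilde I|.$$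
   Context: $\mathrm{span}_i(T)=\{e\in E:\mathrm{rank}_{\mathcal{M}_i}(T\cup\{e\})=\mathrm{rank}_{\mathcal{M}_i}(T)\}$. For a matroid $\mathcal{M}$ and independent set $X$, the contraction $\mathcal{M}/X$ has as independent sets those $A$ with $A\cap X=\emptyset$ and $A\cup X$ independent in $\mathcal{M}$. $\mathrm{Greedy}(\mathcal{N}_1,\dots,\mathcal{N}_k,\tilde E)$ processes the elements of $\tilde E$ in the given order starting from the empty set and adds an element whenever the current set together with it is independent in every $\mathcal{N}_j$; it returns the resulting set. *)

theory Defs
  imports "HOL-Probability.Probability"
begin

definition matroid :: "'a set \<Rightarrow> ('a set \<Rightarrow> bool) \<Rightarrow> bool" where
  "matroid E indep \<longleftrightarrow>
     finite E \<and>
     indep {} \<and>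
     (\<forall>X. indep X \<longrightarrow> X \<subseteq> E) \<and>
     (\<forall>X Y. indep X \<and> Y \<subseteq> X \<longrightarrow> indep Y) \<and>
     (\<forall>X Y. indep X \<and> indep Y \<and> card X < card Y \<longrightarrow> (\<exists>e \<in> Y - X. indep (insert e X)))"

definition mrank :: "('a set \<Rightarrow> bool) \<Rightarrow> 'a set \<Rightarrow> nat" where
  "mrank indep X = Max {card Y | Y. Y \<subseteq> X \<and> indep Y}"

definition mspan :: "'a set \<Rightarrow> ('a set \<Rightarrow> bool) \<Rightarrow> 'a set \<Rightarrow> 'a set" where
  "mspan E indep T = {e \<in> E. mrank indep (insert e T) = mrank indep T}"

definition contract :: "('a set \<Rightarrow> bool) \<Rightarrow> 'a set \<Rightarrow> 'a set \<Rightarrow> bool" where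
  "contract indep X = (\<lambda>A. A \<inter> X = {} \<and> indep (A \<union> X))"

definition greedy :: "('a set \<Rightarrow> bool) list \<Rightarrow> 'a list \<Rightarrow> 'a set" where
  "greedy Ns xs = foldl (\<lambda>A e. if (\<forall>N \<in> set Ns. N (insert e A)) then insert e A else A) {} xs"

end

theory Submission
  imports Defs
begin

text \<open>Fix the sample \<open>S\<close> and let \<open>G\<close> be the greedy output. The elements of \<open>It\<close> that lie in \<open>G\<close>
  or are blocked by \<open>\<M>\<^sub>j/T\<close>, \<open>j \<noteq> i\<close>, are spanned by \<open>G \<union> T\<close> in \<open>\<M>\<^sub>j\<close>, so each of these \<open>k - 1\<close>
  matroids accounts for at most \<open>|G|\<close> of them; every other element of \<open>It\<close> was rejected by
  \<open>\<M>\<^sub>i/S\<close> alone, hence is spanned by \<open>G \<union> S\<close>. Call \<open>t \<in> S\<close> critical if it is spanned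
  by \<open>G(S - t) \<union> (S - t)\<close>; dropping a non-critical \<open>t\<close> from \<open>S\<close> does not change \<open>G\<close>, so by
  intersecting closures the rejected elements are spanned by \<open>G \<union> Q(S)\<close>, \<open>Q(S)\<close> the critical
  elements. Altogether \<open>|It| \<le> k |G(S)| + |Q(S)|\<close>.

  Resampling a single coordinate \<open>t\<close> gives \<open>p \<E>|Q| = (1 - p) \<E>|C|\<close>, where \<open>C(S)\<close> is the set
  of \<open>t \<in> T - S\<close> spanned by \<open>G(S) \<union> S\<close>; and \<open>|C(S)| \<le> |G(S)|\<close> since \<open>S \<union> C(S)\<close> is
  independent and spanned by \<open>G(S) \<union> S\<close>. Hence \<open>p |It| \<le> (1 + p (k - 1)) \<E>|G|\<close>.\<close>

text \<open>The span of \<open>X\<close>, provided \<open>X\<close> is independent (the only case in which it is used).\<close>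

definition mclosure :: "('a set \<Rightarrow> bool) \<Rightarrow> 'a set \<Rightarrow> 'a set" where
  "mclosure I X = {x. x \<in> X \<or> \<not> I (insert x X)}"

lemma matroid_indep_subset: "matroid E I \<Longrightarrow> I X \<Longrightarrow> Y \<subseteq> X \<Longrightarrow> I Y"
  unfolding matroid_def by blast

lemma matroid_indep_finite: "matroid E I \<Longrightarrow> I X \<Longrightarrow> finite X"
  unfolding matroid_def by (meson finite_subset)

lemma matroid_augment:
  "matroid E I \<Longrightarrow> I X \<Longrightarrow> I Y \<Longrightarrow> card X < card Y \<Longrightarrow> \<exists>e\<in>Y - X. I (insert e X)"
  unfolding matroid_def by blast

lemma matroid_contract_subset:
  "matroid E I \<Longrightarrow> contract I S X \<Longrightarrow> Y \<subseteq> X \<Longrightarrow> contract I S Y"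
  unfolding contract_def using matroid_indep_subset[of E I "X \<union> S" "Y \<union> S"] by auto

lemma matroid_extend_to_card:
  assumes m: "matroid E I" and X: "I X" and U: "I U"
  obtains K where "X \<subseteq> K" "K \<subseteq> X \<union> U" "I K" "card U \<le> card K"
proof -
  define \<K> where "\<K> = {K. X \<subseteq> K \<and> K \<subseteq> X \<union> U \<and> I K}"
  have "finite \<K>"
    unfolding \<K>_def using matroid_indep_finite[OF m X] matroid_indep_finite[OF m U]
    by (auto intro!: finite_subset[of _ "Pow (X \<union> U)"])
  moreover have "X \<in> \<K>" unfolding \<K>_def using X by auto
  ultimately obtain K where K: "K \<in> \<K>" and max: "\<forall>K'\<in>\<K>. K \<subseteq> K' \<longrightarrow> K = K'"
    using finite_has_maximal by blast
  then have K': "X \<subseteq> K" "K \<subseteq> X \<union> U" "I K" unfolding \<K>_def by auto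
  have "card U \<le> card K"
  proof (rule ccontr)
    assume "\<not> card U \<le> card K"
    then obtain e where e: "e \<in> U - K" "I (insert e K)"
      using matroid_augment[OF m K'(3) U] by auto
    then have "insert e K \<in> \<K>" using K' unfolding \<K>_def by auto
    then show False using max e(1) by auto
  qed
  with K' that show ?thesis by blast
qed

lemma card_le_if_subset_mclosure:
  assumes m: "matroid E I" and X: "I X" and J: "I J" and sub: "J \<subseteq> mclosure I X"
  shows "card J \<le> card X"
proof (rule ccontr)
  assume "\<not> card J \<le> card X"
  then obtain e where "e \<in> J - X" "I (insert e X)" using matroid_augment[OF m X J] by force
  thus False using sub unfolding mclosure_def by auto
qed

text \<open>If \<open>x \<notin> B\<close>, extend \<open>x + (A\<^sub>1 \<inter> A\<^sub>2)\<close> to an independent subset of \<open>x + (A\<^sub>1 \<union> A\<^sub>2)\<close> of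
  size \<open>|A\<^sub>1 \<union> A\<^sub>2|\<close>; as \<open>x\<close> is spanned by \<open>A\<^sub>1\<close> and by \<open>A\<^sub>2\<close>, it misses an element of each,
  which is one too many.\<close>

lemma mclosure_Int:
  assumes m: "matroid E I" and B: "I B" and A1: "A1 \<subseteq> B" and A2: "A2 \<subseteq> B"
    and x1: "x \<in> mclosure I A1" and x2: "x \<in> mclosure I A2"
  shows "x \<in> mclosure I (A1 \<inter> A2)"
proof (rule ccontr)
  assume "x \<notin> mclosure I (A1 \<inter> A2)"
  hence x12: "x \<notin> A1 \<inter> A2" and Ix: "I (insert x (A1 \<inter> A2))" unfolding mclosure_def by auto
  have indep_sub: "I (insert x A) \<Longrightarrow> x \<in> mclosure I A \<Longrightarrow> x \<in> A" for A
    unfolding mclosure_def by auto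
  show False
  proof (cases "x \<in> B")
    case True
    then have "x \<in> A1" "x \<in> A2"
      using indep_sub[OF matroid_indep_subset[OF m B]] A1 A2 x1 x2 by auto
    thus False using x12 by auto
  next
    case False
    define U where "U = A1 \<union> A2"
    have IU: "I U" unfolding U_def using matroid_indep_subset[OF m B] A1 A2 by auto
    have fU: "finite U" using matroid_indep_finite[OF m IU] .
    obtain K where K: "insert x (A1 \<inter> A2) \<subseteq> K" "K \<subseteq> insert x (A1 \<inter> A2) \<union> U"
        "I K" "card U \<le> card K"
      by (rule matroid_extend_to_card[OF m Ix IU])
    have not_sub: "\<not> A \<subseteq> K" if "A \<subseteq> B" "x \<in> mclosure I A" for A
    proof
      assume "A \<subseteq> K"
      then have "I (insert x A)" using matroid_indep_subset[OF m K(3)] K(1) by auto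
      then show False using indep_sub that False by auto
    qed
    obtain a b where a: "a \<in> A1" "a \<notin> K" and b: "b \<in> A2" "b \<notin> K"
      using not_sub[OF A1 x1] not_sub[OF A2 x2] by blast
    have ab: "a \<noteq> b" using a b K(1) by auto
    have "{a, b} \<subseteq> U" using a b unfolding U_def by auto
    then have two: "card U - 2 = card (U - {a, b})" "2 \<le> card U"
      using ab card_mono[OF fU, of "{a, b}"] by (simp_all add: card_Diff_subset)
    have "card K \<le> card (insert x (U - {a, b}))"
      using K(2) a b fU unfolding U_def by (intro card_mono) auto
    also have "\<dots> \<le> Suc (card U - 2)"
      using fU two(1) by (simp add: card_insert_if)
    finally show False using K(4) two(2) by linarith
  qed
qed

lemma mclosure_Diff:
  assumes m: "matroid E I" and B: "I B" and "finite D" "D \<subseteq> B"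
    and "x \<in> mclosure I B" and "\<And>t. t \<in> D \<Longrightarrow> x \<in> mclosure I (B - {t})"
  shows "x \<in> mclosure I (B - D)"
  using assms(3-)
proof (induction D rule: finite_induct)
  case empty thus ?case by simp
next
  case (insert d D)
  have "x \<in> mclosure I ((B - D) \<inter> (B - {d}))"
    by (rule mclosure_Int[OF m B]) (use insert in auto)
  moreover have "(B - D) \<inter> (B - {d}) = B - insert d D" by auto
  ultimately show ?case by simp
qed

text \<open>Greedy for \<open>I/S\<close> subject to an extra hereditary constraint \<open>F\<close>, which stands for
  independence in every \<open>\<M>\<^sub>j/T\<close>, \<open>j \<noteq> i\<close>, the part not depending on the sample \<open>S\<close>.\<close>

definition cgreedy_step :: "('a set \<Rightarrow> bool) \<Rightarrow> ('a set \<Rightarrow> bool) \<Rightarrow> 'a set \<Rightarrow> 'a set \<Rightarrow> 'a \<Rightarrow> 'a set"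
  where "cgreedy_step F I S A e =
    (if F (insert e A) \<and> contract I S (insert e A) then insert e A else A)"

definition cgreedy :: "('a set \<Rightarrow> bool) \<Rightarrow> ('a set \<Rightarrow> bool) \<Rightarrow> 'a set \<Rightarrow> 'a list \<Rightarrow> 'a set"
  where "cgreedy F I S xs = foldl (cgreedy_step F I S) {} xs"

lemma foldl_cgreedy_step_mono: "A \<subseteq> foldl (cgreedy_step F I S) A xs"
proof (induction xs arbitrary: A)
  case (Cons y ys)
  have "A \<subseteq> cgreedy_step F I S A y" unfolding cgreedy_step_def by auto
  with Cons.IH show ?case by (auto intro: subset_trans)
qed simp

lemma foldl_cgreedy_step_invariant:
  "F A \<Longrightarrow> contract I S A \<Longrightarrow>
    F (foldl (cgreedy_step F I S) A xs) \<and> contract I S (foldl (cgreedy_step F I S) A xs)"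
  by (induction xs arbitrary: A) (auto simp: cgreedy_step_def)

lemma foldl_cgreedy_step_maximal:
  assumes m: "matroid E I" and F: "\<forall>X Y. F X \<and> Y \<subseteq> X \<longrightarrow> F Y"
    and "x \<in> set xs" "x \<notin> foldl (cgreedy_step F I S) A xs"
  shows "\<not> (F (insert x (foldl (cgreedy_step F I S) A xs))
            \<and> contract I S (insert x (foldl (cgreedy_step F I S) A xs)))"
  using assms(3,4)
proof (induction xs arbitrary: A)
  case (Cons y ys)
  show ?case
  proof (cases "x = y")
    case True
    let ?R = "foldl (cgreedy_step F I S) A (y # ys)"
    have sub: "cgreedy_step F I S A y \<subseteq> ?R" using foldl_cgreedy_step_mono by simp
    with Cons.prems have "x \<notin> cgreedy_step F I S A y" by auto
    with True have rejected: "\<not> (F (insert x A) \<and> contract I S (insert x A))"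
      and "cgreedy_step F I S A y = A"
      unfolding cgreedy_step_def by (auto split: if_splits)
    with sub have sub': "insert x A \<subseteq> insert x ?R" by auto
    show ?thesis
    proof
      assume "F (insert x ?R) \<and> contract I S (insert x ?R)"
      then have "F (insert x A) \<and> contract I S (insert x A)"
        using F sub' matroid_contract_subset[OF m] by blast
      with rejected show False ..
    qed
  next
    case False
    with Cons show ?thesis by simp
  qed
qed simp

lemma foldl_cgreedy_step_insert_contracted:
  assumes m: "matroid E I" and "t \<notin> mclosure I (foldl (cgreedy_step F I S) A xs \<union> S)"
  shows "foldl (cgreedy_step F I (insert t S)) A xs = foldl (cgreedy_step F I S) A xs"
  using assms(2)
proof (induction xs arbitrary: A)
  case (Cons y ys)
  let ?A' = "cgreedy_step F I S A y"
  have "?A' \<subseteq> foldl (cgreedy_step F I S) ?A' ys" by (rule foldl_cgreedy_step_mono)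
  moreover have "t \<notin> foldl (cgreedy_step F I S) ?A' ys \<union> S"
    and indep: "I (insert t (foldl (cgreedy_step F I S) ?A' ys \<union> S))"
    using Cons.prems unfolding mclosure_def by auto
  ultimately have "I (insert t (?A' \<union> S))" and "t \<notin> ?A' \<union> S"
    using matroid_indep_subset[OF m indep, of "insert t (?A' \<union> S)"] by auto
  then have "cgreedy_step F I (insert t S) A y = ?A'"
    using matroid_indep_subset[OF m, of "insert y A \<union> insert t S" "insert y A \<union> S"]
    unfolding cgreedy_step_def contract_def by (auto split: if_splits)
  with Cons show ?case by simp
qed simp

lemma cgreedy_indep:
  assumes "F {}" and "I S"
  shows "F (cgreedy F I S xs)" "cgreedy F I S xs \<inter> S = {}" "I (cgreedy F I S xs \<union> S)"
  using foldl_cgreedy_step_invariant[of F "{}" I S xs] assms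
  unfolding cgreedy_def contract_def by auto

lemma cgreedy_mclosure:
  assumes m: "matroid E I" and F: "\<forall>X Y. F X \<and> Y \<subseteq> X \<longrightarrow> F Y" and "F {}" "I S"
    and "x \<in> set xs" "x \<notin> cgreedy F I S xs" "F (insert x (cgreedy F I S xs))"
  shows "x \<in> mclosure I (cgreedy F I S xs \<union> S)"
  using foldl_cgreedy_step_maximal[where F=F and x=x and xs=xs and S=S and A="{}", OF m F]
    cgreedy_indep(2)[of F I S xs] assms(3-)
  unfolding cgreedy_def contract_def mclosure_def by auto

lemma cgreedy_insert_eq:
  assumes "matroid E I" and "t \<notin> mclosure I (cgreedy F I S xs \<union> S)"
  shows "cgreedy F I (insert t S) xs = cgreedy F I S xs"
  using foldl_cgreedy_step_insert_contracted[OF assms(1)] assms(2) unfolding cgreedy_def by blast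

definition contract_all :: "'j set \<Rightarrow> ('j \<Rightarrow> 'a set \<Rightarrow> bool) \<Rightarrow> 'a set \<Rightarrow> 'a set \<Rightarrow> bool"
  where "contract_all J N T X \<longleftrightarrow> (\<forall>j\<in>J. contract (N j) T X)"

lemma greedy_eq_cgreedy:
  assumes "i < k"
  shows "greedy (map (\<lambda>j. if j = i then contract (M j) S else contract (M j) T) [0..<k]) xs
       = cgreedy (contract_all ({..<k} - {i}) M T) (M i) S xs"
proof -
  have "(\<forall>N\<in>set (map (\<lambda>j. if j = i then contract (M j) S else contract (M j) T) [0..<k]). N X)
     \<longleftrightarrow> contract_all ({..<k} - {i}) M T X \<and> contract (M i) S X" for X
    using assms by (auto simp: contract_all_def)
  then show ?thesis unfolding greedy_def cgreedy_def cgreedy_step_def by simp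
qed

lemma contract_all_subset:
  "\<forall>j\<in>J. matroid E (N j) \<Longrightarrow> contract_all J N T X \<Longrightarrow> Y \<subseteq> X \<Longrightarrow> contract_all J N T Y"
  unfolding contract_all_def by (meson matroid_contract_subset)

lemma card_blocked_le:
  assumes m: "matroid E I" and It: "contract I T It" and G: "contract I T G"
  shows "card {x\<in>It. x \<in> G \<or> \<not> contract I T (insert x G)} \<le> card G"
proof -
  define Y where "Y = {x\<in>It. x \<in> G \<or> \<not> contract I T (insert x G)}"
  have GT: "G \<inter> T = {}" "I (G \<union> T)" and ItT: "It \<inter> T = {}" "I (It \<union> T)"
    using G It unfolding contract_def by auto
  have "I (Y \<union> T)" by (rule matroid_indep_subset[OF m ItT(2)]) (auto simp: Y_def)
  moreover have "Y \<union> T \<subseteq> mclosure I (G \<union> T)"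
    using GT(1) unfolding Y_def mclosure_def contract_def by auto
  ultimately have "card (Y \<union> T) \<le> card (G \<union> T)"
    by (rule card_le_if_subset_mclosure[OF m GT(2)])
  moreover have "finite (Y \<union> T)" "finite (G \<union> T)" "Y \<inter> T = {}"
    using matroid_indep_finite[OF m] \<open>I (Y \<union> T)\<close> GT(2) ItT(1) by (auto simp: Y_def)
  ultimately show ?thesis using GT(1) unfolding Y_def[symmetric] by (simp add: card_Un_disjoint)
qed

lemma card_le_blocked_plus_free:
  assumes "finite J" "J \<noteq> {}" and m: "\<And>j. j \<in> J \<Longrightarrow> matroid E (N j)"
    and It: "contract_all J N T It" and G: "contract_all J N T G"
  shows "card It \<le> card J * card G + card {x\<in>It. x \<notin> G \<and> contract_all J N T (insert x G)}"
proof -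
  define Y where "Y j = {x\<in>It. x \<in> G \<or> \<not> contract (N j) T (insert x G)}" for j
  define W where "W = {x\<in>It. x \<notin> G \<and> contract_all J N T (insert x G)}"
  obtain j where "j \<in> J" using \<open>J \<noteq> {}\<close> by blast
  then have "finite (It \<union> T)"
    using matroid_indep_finite[OF m] It unfolding contract_all_def contract_def by blast
  then have "finite It" by simp
  have "It \<subseteq> (\<Union>j\<in>J. Y j) \<union> W"
    using \<open>J \<noteq> {}\<close> unfolding Y_def W_def contract_all_def by auto
  then have "card It \<le> card ((\<Union>j\<in>J. Y j) \<union> W)"
    using \<open>finite J\<close> \<open>finite It\<close> by (intro card_mono) (auto simp: Y_def W_def)
  also have "\<dots> \<le> card (\<Union>j\<in>J. Y j) + card W" by (rule card_Un_le)
  also have "card (\<Union>j\<in>J. Y j) \<le> (\<Sum>j\<in>J. card (Y j))" by (rule card_UN_le[OF \<open>finite J\<close>])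
  also have "(\<Sum>j\<in>J. card (Y j)) \<le> (\<Sum>j\<in>J. card G)"
    by (rule sum_mono) (use card_blocked_le[OF m] It G in \<open>auto simp: Y_def contract_all_def\<close>)
  finally show ?thesis unfolding W_def by simp
qed

lemma card_rejected_le:
  assumes m: "matroid E I" and IS: "I S" and IIt: "I It"
    and F: "\<forall>X Y. F X \<and> Y \<subseteq> X \<longrightarrow> F Y" "F {}" and It: "It \<subseteq> set xs"
  shows "card {x\<in>It. x \<notin> cgreedy F I S xs \<and> F (insert x (cgreedy F I S xs))}
    \<le> card (cgreedy F I S xs)
       + card {t\<in>S. t \<in> mclosure I (cgreedy F I (S - {t}) xs \<union> (S - {t}))}"
proof -
  define G where "G = cgreedy F I S xs"
  define Q where "Q = {t\<in>S. t \<in> mclosure I (cgreedy F I (S - {t}) xs \<union> (S - {t}))}"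
  define W where "W = {x\<in>It. x \<notin> G \<and> F (insert x G)}"
  have GS: "G \<inter> S = {}" "I (G \<union> S)"
    using cgreedy_indep[of F I S xs, OF F(2) IS] unfolding G_def by auto
  have IS': "I (S - {t})" for t using matroid_indep_subset[OF m IS] by blast
  have same: "cgreedy F I (S - {t}) xs = G" if "t \<in> S - Q" for t
    using cgreedy_insert_eq[OF m, of t F "S - {t}" xs] that unfolding Q_def G_def
    by (auto simp: insert_absorb)
  have W: "W \<subseteq> mclosure I (G \<union> S - (S - Q))"
  proof
    fix x assume "x \<in> W"
    then have x: "x \<in> set xs" "x \<notin> G" "F (insert x G)" using It unfolding W_def by auto
    have "x \<in> mclosure I (G \<union> S - {t})" if "t \<in> S - Q" for t
    proof -
      have "x \<in> mclosure I (G \<union> (S - {t}))"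
        using cgreedy_mclosure[where F=F, OF m F IS'[of t] x(1)] same[OF that] x by simp
      moreover have "G \<union> (S - {t}) = G \<union> S - {t}" using GS(1) that by auto
      ultimately show ?thesis by simp
    qed
    moreover have "x \<in> mclosure I (G \<union> S)"
      using cgreedy_mclosure[where F=F, OF m F IS x(1)] x unfolding G_def by simp
    ultimately show "x \<in> mclosure I (G \<union> S - (S - Q))"
      using mclosure_Diff[OF m GS(2), of "S - Q"] matroid_indep_finite[OF m IS] by blast
  qed
  have "G \<union> S - (S - Q) = G \<union> Q" using GS(1) unfolding Q_def by auto
  moreover have "I W" by (rule matroid_indep_subset[OF m IIt]) (auto simp: W_def)
  moreover have "I (G \<union> Q)" by (rule matroid_indep_subset[OF m GS(2)]) (auto simp: Q_def)
  ultimately have "card W \<le> card (G \<union> Q)" using card_le_if_subset_mclosure[OF m _ _ W] by simp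
  also have "\<dots> \<le> card G + card Q" by (rule card_Un_le)
  finally show ?thesis unfolding W_def G_def Q_def .
qed

lemma card_spanned_outside_le:
  assumes m: "matroid E I" and IT: "I T" and "F {}" and "S \<subseteq> T"
  shows "card {t\<in>T - S. t \<in> mclosure I (cgreedy F I S xs \<union> S)} \<le> card (cgreedy F I S xs)"
proof -
  define G where "G = cgreedy F I S xs"
  define C where "C = {t\<in>T - S. t \<in> mclosure I (G \<union> S)}"
  have IS: "I S" using matroid_indep_subset[OF m IT] assms(4) .
  have GS: "G \<inter> S = {}" "I (G \<union> S)"
    using cgreedy_indep[of F I S xs, OF assms(3) IS] unfolding G_def by auto
  have "I (S \<union> C)" using matroid_indep_subset[OF m IT] assms(4) unfolding C_def by auto
  moreover have "S \<union> C \<subseteq> mclosure I (G \<union> S)" unfolding C_def mclosure_def by auto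
  ultimately have "card (S \<union> C) \<le> card (G \<union> S)"
    using card_le_if_subset_mclosure[OF m GS(2)] by blast
  moreover have "finite (S \<union> C)" "finite (G \<union> S)" "S \<inter> C = {}"
    using matroid_indep_finite[OF m] \<open>I (S \<union> C)\<close> GS(2) by (auto simp: C_def)
  ultimately have "card C \<le> card G" using GS(1) by (simp add: card_Un_disjoint)
  then show ?thesis unfolding C_def G_def .
qed

lemma card_le_cgreedy_plus_critical:
  assumes m: "matroid E I" and IS: "I S" and IIt: "I It" and It: "It \<subseteq> set xs"
    and J: "finite J" "J \<noteq> {}" and N: "\<And>j. j \<in> J \<Longrightarrow> matroid E (N j)" "\<And>j. j \<in> J \<Longrightarrow> N j T"
    and It': "contract_all J N T It"
  defines "G \<equiv> \<lambda>S. cgreedy (contract_all J N T) I S xs"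
  shows "card It \<le> (card J + 1) * card (G S)
    + card {t\<in>S. t \<in> mclosure I (G (S - {t}) \<union> (S - {t}))}"
proof -
  have F: "\<forall>X Y. contract_all J N T X \<and> Y \<subseteq> X \<longrightarrow> contract_all J N T Y"
    using contract_all_subset[of J E N T] N(1) by blast
  have F0: "contract_all J N T {}" using N(2) unfolding contract_all_def contract_def by simp
  have "card It \<le> card J * card (G S)
      + card {x\<in>It. x \<notin> G S \<and> contract_all J N T (insert x (G S))}"
    unfolding G_def by (rule card_le_blocked_plus_free[OF J N(1) It'
        cgreedy_indep(1)[of "contract_all J N T" I S xs, OF F0 IS]])
  also have "card {x\<in>It. x \<notin> G S \<and> contract_all J N T (insert x (G S))}
      \<le> card (G S) + card {t\<in>S. t \<in> mclosure I (G (S - {t}) \<union> (S - {t}))}"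
    using card_rejected_le[OF m IS IIt F F0 It] unfolding G_def .
  finally show ?thesis by simp
qed

definition bernoulli_weight :: "'a set \<Rightarrow> real \<Rightarrow> 'a set \<Rightarrow> real" where
  "bernoulli_weight T p S = (\<Prod>x\<in>T. if x \<in> S then 1 - p else p)"

lemma bernoulli_weight_nonneg: "0 \<le> p \<Longrightarrow> p \<le> 1 \<Longrightarrow> 0 \<le> bernoulli_weight T p S"
  unfolding bernoulli_weight_def by (rule prod_nonneg) auto

lemma expectation_Pi_pmf_bernoulli:
  assumes fT: "finite T" and p: "0 \<le> p" "p \<le> 1"
  shows "measure_pmf.expectation (Pi_pmf T False (\<lambda>_. bernoulli_pmf (1 - p))) f
         = (\<Sum>S\<in>Pow T. f (\<lambda>x. x \<in> S) * bernoulli_weight T p S)"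
proof -
  let ?P = "Pi_pmf T False (\<lambda>_. bernoulli_pmf (1 - p))"
  let ?A = "(\<lambda>S x. x \<in> S) ` Pow T"
  have "measure_pmf.expectation ?P f = (\<Sum>a\<in>?A. f a * pmf ?P a)"
  proof (rule integral_measure_pmf_real)
    show "finite ?A" using fT by simp
    fix a assume "a \<in> set_pmf ?P"
    then have "\<forall>x. x \<notin> T \<longrightarrow> a x = False"
      using set_Pi_pmf_subset[OF fT, of False "\<lambda>_. bernoulli_pmf (1 - p)"] by blast
    then have "a = (\<lambda>x. x \<in> {e\<in>T. a e})" by auto
    then show "a \<in> ?A" by blast
  qed
  also have "\<dots> = (\<Sum>S\<in>Pow T. f (\<lambda>x. x \<in> S) * pmf ?P (\<lambda>x. x \<in> S))"
    by (rule sum.reindex[unfolded comp_def]) (auto intro!: inj_onI simp: fun_eq_iff)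
  also have "\<dots> = (\<Sum>S\<in>Pow T. f (\<lambda>x. x \<in> S) * bernoulli_weight T p S)"
  proof (rule sum.cong[OF refl])
    fix S assume "S \<in> Pow T"
    then have "pmf ?P (\<lambda>x. x \<in> S) = (\<Prod>x\<in>T. pmf (bernoulli_pmf (1 - p)) (x \<in> S))"
      by (subst pmf_Pi[OF fT]) auto
    also have "\<dots> = bernoulli_weight T p S"
      unfolding bernoulli_weight_def by (rule prod.cong[OF refl]) (use p in auto)
    finally show "f (\<lambda>x. x \<in> S) * pmf ?P (\<lambda>x. x \<in> S) = f (\<lambda>x. x \<in> S) * bernoulli_weight T p S"
      by simp
  qed
  finally show ?thesis .
qed

lemma sum_bernoulli_weight:
  "finite T \<Longrightarrow> 0 \<le> p \<Longrightarrow> p \<le> 1 \<Longrightarrow> (\<Sum>S\<in>Pow T. bernoulli_weight T p S) = 1"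
  using expectation_Pi_pmf_bernoulli[of T p "\<lambda>_. 1"] by simp

lemma expectation_greedy_eq_sum:
  assumes "finite T" "0 \<le> p" "p \<le> 1" "i < k"
  shows "measure_pmf.expectation (Pi_pmf T False (\<lambda>_. bernoulli_pmf (1 - p)))
           (\<lambda>\<Psi>. real (card (greedy
              (map (\<lambda>j. if j = i then contract (M j) {e \<in> T. \<Psi> e} else contract (M j) T) [0..<k])
              xs)))
      = (\<Sum>S\<in>Pow T. bernoulli_weight T p S
          * real (card (cgreedy (contract_all ({..<k} - {i}) M T) (M i) S xs)))"
  unfolding expectation_Pi_pmf_bernoulli[OF assms(1-3)]
proof (rule sum.cong[OF refl])
  fix S assume "S \<in> Pow T"
  then have "{e \<in> T. e \<in> S} = S" by auto
  then show "real (card (greedy (map (\<lambda>j. if j = i then contract (M j) {e \<in> T. e \<in> S}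
        else contract (M j) T) [0..<k]) xs)) * bernoulli_weight T p S
      = bernoulli_weight T p S
          * real (card (cgreedy (contract_all ({..<k} - {i}) M T) (M i) S xs))"
    by (simp add: greedy_eq_cgreedy[OF assms(4)])
qed

lemma sum_Pow_remove:
  fixes h :: "'a set \<Rightarrow> 'b::comm_monoid_add"
  assumes "finite T" and "t \<in> T"
  shows "(\<Sum>S\<in>Pow T. h S) = (\<Sum>S\<in>Pow (T - {t}). h S + h (insert t S))"
proof -
  have "Pow T = Pow (T - {t}) \<union> insert t ` Pow (T - {t})"
    using Pow_insert[of t "T - {t}"] assms(2) by (simp add: insert_absorb)
  then have "(\<Sum>S\<in>Pow T. h S) = (\<Sum>S\<in>Pow (T - {t}). h S) + (\<Sum>S\<in>insert t ` Pow (T - {t}). h S)"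
    using assms(1) by (simp only:) (rule sum.union_disjoint, auto)
  also have "(\<Sum>S\<in>insert t ` Pow (T - {t}). h S) = (\<Sum>S\<in>Pow (T - {t}). h (insert t S))"
    by (rule sum.reindex_cong[of "insert t"]) (auto intro!: inj_onI simp: insert_ident)
  finally show ?thesis by (simp add: sum.distrib)
qed

lemma bernoulli_weight_remove:
  assumes "finite T" "t \<in> T" "S \<subseteq> T - {t}"
  shows "bernoulli_weight T p S = p * bernoulli_weight (T - {t}) p S"
    and "bernoulli_weight T p (insert t S) = (1 - p) * bernoulli_weight (T - {t}) p S"
  using assms unfolding bernoulli_weight_def
  by (auto simp: prod.remove[OF assms(1,2)] intro!: prod.cong)

text \<open>Resampling the coordinate \<open>t\<close>: the events \<open>t \<in> S\<close> and \<open>t \<notin> S\<close> have probabilities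
  \<open>1 - p\<close> and \<open>p\<close>, independently of \<open>S - {t}\<close>.\<close>

lemma bernoulli_resample:
  fixes h :: "'a set \<Rightarrow> real"
  assumes "finite T" "t \<in> T"
  shows "p * (\<Sum>S\<in>Pow T. bernoulli_weight T p S * (if t \<in> S then h (S - {t}) else 0))
       = (1 - p) * (\<Sum>S\<in>Pow T. bernoulli_weight T p S * (if t \<notin> S then h S else 0))"
proof -
  have "(\<Sum>S\<in>Pow T. bernoulli_weight T p S * (if t \<in> S then h (S - {t}) else 0))
      = (1 - p) * (\<Sum>S\<in>Pow (T - {t}). bernoulli_weight (T - {t}) p S * h S)"
    by (auto simp: sum_Pow_remove[OF assms] bernoulli_weight_remove[OF assms] sum_distrib_left
        intro!: sum.cong)
  moreover have "(\<Sum>S\<in>Pow T. bernoulli_weight T p S * (if t \<notin> S then h S else 0))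
      = p * (\<Sum>S\<in>Pow (T - {t}). bernoulli_weight (T - {t}) p S * h S)"
    by (auto simp: sum_Pow_remove[OF assms] bernoulli_weight_remove[OF assms] sum_distrib_left
        intro!: sum.cong)
  ultimately show ?thesis by simp
qed

lemma bernoulli_critical_eq_spanned:
  fixes q :: "'a \<Rightarrow> 'a set \<Rightarrow> bool"
  assumes fT: "finite T"
  shows "p * (\<Sum>S\<in>Pow T. bernoulli_weight T p S * real (card {t\<in>S. q t (S - {t})}))
       = (1 - p) * (\<Sum>S\<in>Pow T. bernoulli_weight T p S * real (card {t\<in>T - S. q t S}))"
proof -
  have card_eq: "real (card {t\<in>A. P t}) = (\<Sum>t\<in>T. if t \<in> A \<and> P t then 1 else 0)"
    if "A \<subseteq> T" for A P
  proof -
    have "{t\<in>A. P t} = {t\<in>T. t \<in> A \<and> P t}" using that by auto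
    then have "real (card {t\<in>A. P t}) = (\<Sum>t\<in>{t\<in>T. t \<in> A \<and> P t}. 1)" by simp
    also have "\<dots> = (\<Sum>t\<in>T. if t \<in> A \<and> P t then 1 else 0)" by (rule sum.inter_filter[OF fT])
    finally show ?thesis .
  qed
  define ind where "ind t S = (if q t S then 1 else 0 :: real)" for t S
  have "(\<Sum>S\<in>Pow T. bernoulli_weight T p S * real (card {t\<in>S. q t (S - {t})}))
      = (\<Sum>S\<in>Pow T. \<Sum>t\<in>T. bernoulli_weight T p S * (if t \<in> S then ind t (S - {t}) else 0))"
    by (rule sum.cong[OF refl]) (auto simp: card_eq ind_def sum_distrib_left intro!: sum.cong)
  also have "\<dots> = (\<Sum>t\<in>T. \<Sum>S\<in>Pow T. bernoulli_weight T p S * (if t \<in> S then ind t (S - {t}) else 0))"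
    by (rule sum.swap)
  finally have L: "p * (\<Sum>S\<in>Pow T. bernoulli_weight T p S * real (card {t\<in>S. q t (S - {t})}))
      = (\<Sum>t\<in>T. p * (\<Sum>S\<in>Pow T. bernoulli_weight T p S * (if t \<in> S then ind t (S - {t}) else 0)))"
    by (simp add: sum_distrib_left)
  have "(\<Sum>S\<in>Pow T. bernoulli_weight T p S * real (card {t\<in>T - S. q t S}))
      = (\<Sum>S\<in>Pow T. \<Sum>t\<in>T. bernoulli_weight T p S * (if t \<notin> S then ind t S else 0))"
    by (rule sum.cong[OF refl]) (auto simp: card_eq ind_def sum_distrib_left intro!: sum.cong)
  also have "\<dots> = (\<Sum>t\<in>T. \<Sum>S\<in>Pow T. bernoulli_weight T p S * (if t \<notin> S then ind t S else 0))"
    by (rule sum.swap)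
  finally have R: "(1 - p) * (\<Sum>S\<in>Pow T. bernoulli_weight T p S * real (card {t\<in>T - S. q t S}))
      = (\<Sum>t\<in>T. (1 - p) * (\<Sum>S\<in>Pow T. bernoulli_weight T p S * (if t \<notin> S then ind t S else 0)))"
    by (simp add: sum_distrib_left)
  show ?thesis unfolding L R using bernoulli_resample[OF fT] by simp
qed

lemma weighted_average_bound:
  fixes w g Q C :: "'b \<Rightarrow> real" and a p k :: real
  assumes "\<And>x. x \<in> A \<Longrightarrow> 0 \<le> w x" "(\<Sum>x\<in>A. w x) = 1" "0 < p" "p \<le> 1" "1 \<le> k"
    and pointwise: "\<And>x. x \<in> A \<Longrightarrow> a \<le> k * g x + Q x" "\<And>x. x \<in> A \<Longrightarrow> C x \<le> g x"
    and QC: "p * (\<Sum>x\<in>A. w x * Q x) = (1 - p) * (\<Sum>x\<in>A. w x * C x)"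
  shows "p / (1 + p * (k - 1)) * a \<le> (\<Sum>x\<in>A. w x * g x)"
proof -
  let ?X = "\<Sum>x\<in>A. w x * g x"
  have "p * a = (\<Sum>x\<in>A. w x * (p * a))" using assms(2) by (simp flip: sum_distrib_right)
  also have "\<dots> \<le> (\<Sum>x\<in>A. w x * (p * (k * g x + Q x)))"
    using assms(1,3) pointwise(1) by (intro sum_mono mult_left_mono) auto
  also have "\<dots> = p * k * ?X + p * (\<Sum>x\<in>A. w x * Q x)"
    by (simp add: sum_distrib_left sum.distrib algebra_simps)
  also have "\<dots> = p * k * ?X + (1 - p) * (\<Sum>x\<in>A. w x * C x)" using QC by simp
  also have "\<dots> \<le> p * k * ?X + (1 - p) * ?X"
    using assms(1,4) pointwise(2) by (intro add_left_mono mult_left_mono sum_mono) auto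
  finally have "p * a \<le> (1 + p * (k - 1)) * ?X" by (simp add: algebra_simps)
  moreover have "0 < 1 + p * (k - 1)" using assms(3,5) by (simp add: add_pos_nonneg)
  ultimately show ?thesis by (simp add: pos_divide_le_eq mult.commute)
qed

theorem lemma15:
  fixes E :: "'a set" and M :: "nat \<Rightarrow> 'a set \<Rightarrow> bool" and k i :: nat
    and T Et It :: "'a set" and order :: "'a list" and p :: real
  assumes "k \<ge> 2"
    and "\<And>j. j < k \<Longrightarrow> matroid E (M j)"
    and "\<And>j. j < k \<Longrightarrow> M j T"
    and "0 < p" and "p < 1"
    and "i < k"
    and "Et \<subseteq> mspan E (M i) T"
    and "It \<subseteq> Et"
    and "M i It"
    and "\<And>j. j < k \<Longrightarrow> j \<noteq> i \<Longrightarrow> contract (M j) T It"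
    and "distinct order" and "set order = Et"
  shows "measure_pmf.expectation (Pi_pmf T False (\<lambda>_. bernoulli_pmf (1 - p)))
           (\<lambda>\<Psi>. real (card (greedy
              (map (\<lambda>j. if j = i then contract (M j) {e \<in> T. \<Psi> e} else contract (M j) T) [0..<k])
              order)))
         \<ge> p / (1 + p * (real k - 1)) * real (card It)"
proof -
  define J where "J = {..<k} - {i}"
  define G where "G S = cgreedy (contract_all J M T) (M i) S order" for S
  define q where "q t S = (t \<in> mclosure (M i) (G S \<union> S))" for t S
  have mi: "matroid E (M i)" and fT: "finite T" and "finite J" and cardJ: "card J = k - 1"
    using assms(2,3,6) matroid_indep_finite[of E "M i" T] unfolding J_def by auto
  have "(if i = 0 then 1 else 0) \<in> J" using assms(1) unfolding J_def by auto
  then have "J \<noteq> {}" by blast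
  have "measure_pmf.expectation (Pi_pmf T False (\<lambda>_. bernoulli_pmf (1 - p)))
           (\<lambda>\<Psi>. real (card (greedy
              (map (\<lambda>j. if j = i then contract (M j) {e \<in> T. \<Psi> e} else contract (M j) T) [0..<k])
              order)))
      = (\<Sum>S\<in>Pow T. bernoulli_weight T p S * real (card (G S)))"
    using expectation_greedy_eq_sum[OF fT _ _ assms(6)] assms(4,5) unfolding G_def J_def by simp
  moreover have "p / (1 + p * (real k - 1)) * real (card It)
      \<le> (\<Sum>S\<in>Pow T. bernoulli_weight T p S * real (card (G S)))"
  proof (rule weighted_average_bound)
    fix S assume "S \<in> Pow T"
    then have S: "S \<subseteq> T" "M i S" using matroid_indep_subset[OF mi assms(3)[OF assms(6)]] by auto
    have "card It \<le> (card J + 1) * card (G S) + card {t\<in>S. q t (S - {t})}"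
      using card_le_cgreedy_plus_critical[OF mi S(2) assms(9) _ \<open>finite J\<close> \<open>J \<noteq> {}\<close>, of order M T]
        assms(2,3,8,10,12) unfolding G_def q_def J_def contract_all_def by auto
    then show "real (card It) \<le> real k * real (card (G S)) + real (card {t\<in>S. q t (S - {t})})"
      using cardJ assms(1) by (simp flip: of_nat_mult of_nat_add)
    have "contract_all J M T {}" using assms(3) unfolding J_def contract_all_def contract_def by simp
    then show "real (card {t\<in>T - S. q t S}) \<le> real (card (G S))"
      using card_spanned_outside_le[OF mi assms(3)[OF assms(6)] _ S(1)] unfolding G_def q_def by simp
  next
    show "p * (\<Sum>S\<in>Pow T. bernoulli_weight T p S * real (card {t\<in>S. q t (S - {t})}))
        = (1 - p) * (\<Sum>S\<in>Pow T. bernoulli_weight T p S * real (card {t\<in>T - S. q t S}))"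
      by (rule bernoulli_critical_eq_spanned[OF fT])
  qed (use assms(1,4,5) sum_bernoulli_weight[OF fT] in \<open>auto intro!: bernoulli_weight_nonneg\<close>)
  ultimately show ?thesis by simp
qed

end
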